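(* Let $(X,d)$ be a complete metric space and let $G:X\times X\to X$ be a mapping such that (a) $G(x,x)=x$ for all $x\in X$, and (b) for $x,y\in X$, $G(x,y)=x$ implies $y=x$. Let $T:X\to P_{cl}(X)$ be a multivalued operator with $SFix(T)\neq\emptyset$ and let $T_G(x)=\{G(x,u):u\in T(x)\}$ be the admissible perturbation of $T$ corresponding to $G$. Suppose there exist $\alpha,\beta,\gamma\ge0$ with $\alpha+\beta+\gamma<1$ such that $$H(T_G(x),T_G(y))\le\alpha d(x,y)+\beta D(x,T_G(y))+\gamma D(y,T_G(x))\quad\text{for all }x,y\in X,$$ so that $SFix(T)=\{x^*\}$ for some $x^*$, and suppose there exists $l\in(0,1)$ such that $H(T(x),\{x^*\})\le l\,H(T_G(x),\{x^*\})$ for all $x\in X$. Then $T$ is a quasi-contraction: there exists $q\in(0,1)$ such that $H(T(x),\{x^*\})\le q\,d(x,x^* )$ for all $x^*\in SFix(T)$ and all $x\in X$.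
   Context: $P_{cl}(X)$ is the family of nonempty closed subsets of $X$; $SFix(T)=\{x:T(x)=\{x\}\}$. For nonempty $A,B\subseteq X$: $D(a,B)=\inf_{b\in B}d(a,b)$, $e(A,B)=\sup_{a\in A}D(a,B)$, $H(A,B)=\max\{e(A,B),e(B,A)\}$. *)

theory Defs
  imports "HOL-Analysis.Analysis" "HOL-Library.Extended_Real"
begin

text \<open>D(a,B) = inf of distances (the library's infdist; B nonempty in all uses).\<close>
definition Dpt :: "'a::metric_space \<Rightarrow> 'a set \<Rightarrow> real" where
  "Dpt a B = infdist a B"

definition excess :: "'a::metric_space set \<Rightarrow> 'a set \<Rightarrow> ereal" where
  "excess A B = (SUP a\<in>A. ereal (Dpt a B))"

definition Hpd :: "'a::metric_space set \<Rightarrow> 'a set \<Rightarrow> ereal" where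
  "Hpd A B = max (excess A B) (excess B A)"

definition SFix :: "('a \<Rightarrow> 'a set) \<Rightarrow> 'a set" where
  "SFix T = {x. T x = {x}}"

definition TG :: "('a \<Rightarrow> 'a \<Rightarrow> 'a) \<Rightarrow> ('a \<Rightarrow> 'a set) \<Rightarrow> 'a \<Rightarrow> 'a set" where
  "TG G T x = (\<lambda>u. G x u) ` T x"

end

theory Submission
  imports Defs
begin

text \<open>At a strict fixed point x* the perturbation satisfies T_G(x*) = {x*}, so the contraction
  condition with y = x* reads H <= (alpha + beta) d + gamma D(x*, T_G x) <= (alpha + beta) d + gamma H,
  where H = H(T_G x, {x*}) and d = d(x, x*). Hence H <= (alpha + beta)/(1 - gamma) d <= d, and the
  hypothesis relating T to T_G turns this into H(T x, {x*}) <= l d.\<close>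

lemma excess_singleton: "excess {a} B = ereal (Dpt a B)"
  by (simp add: excess_def)

lemma Dpt_singleton: "Dpt a {b} = dist a b"
  by (simp add: Dpt_def infdist_singleton)

lemma Dpt_le_Hpd_singleton: "ereal (Dpt b A) \<le> Hpd A {b}"
  by (simp add: Hpd_def excess_singleton)

lemma TG_SFix:
  assumes "\<And>x. G x x = x" and "xs \<in> SFix T"
  shows "TG G T xs = {xs}"
  using assms by (simp add: SFix_def TG_def)

lemma Hpd_singleton_le_at_fixed_point:
  fixes F :: "'a::metric_space \<Rightarrow> 'a set"
  assumes fixed: "F xs = {xs}"
    and \<gamma>: "0 \<le> \<gamma>" "\<gamma> < 1"
    and contr: "Hpd (F x) (F xs) \<le> ereal (\<alpha> * dist x xs + \<beta> * Dpt x (F xs) + \<gamma> * Dpt xs (F x))"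
  shows "Hpd (F x) {xs} \<le> ereal ((\<alpha> + \<beta>) / (1 - \<gamma>) * dist x xs)"
proof -
  define D where "D = Dpt xs (F x)"
  have D_le: "ereal D \<le> Hpd (F x) {xs}"
    unfolding D_def by (rule Dpt_le_Hpd_singleton)
  have H_le: "Hpd (F x) {xs} \<le> ereal ((\<alpha> + \<beta>) * dist x xs + \<gamma> * D)"
    using contr by (simp add: fixed D_def Dpt_singleton algebra_simps)
  then obtain h where h: "Hpd (F x) {xs} = ereal h"
    using D_le by (cases "Hpd (F x) {xs}") auto
  have "h \<le> (\<alpha> + \<beta>) * dist x xs + \<gamma> * D" using H_le h by simp
  also have "\<gamma> * D \<le> \<gamma> * h" using D_le h \<gamma> by (simp add: mult_left_mono)
  finally have "(1 - \<gamma>) * h \<le> (\<alpha> + \<beta>) * dist x xs" by (simp add: algebra_simps)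
  then have "h \<le> (\<alpha> + \<beta>) / (1 - \<gamma>) * dist x xs"
    using \<gamma> by (simp add: field_simps)
  then show ?thesis using h by simp
qed

theorem mainTheorem8:
  fixes G :: "'a::complete_space \<Rightarrow> 'a \<Rightarrow> 'a"
    and T :: "'a \<Rightarrow> 'a set"
    and \<alpha> \<beta> \<gamma> l :: real
  assumes G_diag: "\<And>x. G x x = x"
    and G_inj: "\<And>x y. G x y = x \<Longrightarrow> y = x"
    and T_cl: "\<And>x. T x \<noteq> {} \<and> closed (T x)"
    and SFix_ne: "SFix T \<noteq> {}"
    and coef: "\<alpha> \<ge> 0" "\<beta> \<ge> 0" "\<gamma> \<ge> 0" "\<alpha> + \<beta> + \<gamma> < 1"
    and contr: "\<And>x y. Hpd (TG G T x) (TG G T y)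
        \<le> ereal (\<alpha> * dist x y + \<beta> * Dpt x (TG G T y) + \<gamma> * Dpt y (TG G T x))"
    and l: "0 < l" "l < 1"
    and lcond: "\<And>xs x. xs \<in> SFix T \<Longrightarrow> Hpd (T x) {xs} \<le> ereal l * Hpd (TG G T x) {xs}"
  shows "\<exists>q. 0 < q \<and> q < 1 \<and>
    (\<forall>xs\<in>SFix T. \<forall>x. Hpd (T x) {xs} \<le> ereal (q * dist x xs))"
proof (intro exI conjI ballI allI)
  \<comment> \<open>G_inj, T_cl and SFix_ne only serve, in the paper, to produce the fixed point; the
    bound with q = l holds at every strict fixed point without them.\<close>
  fix xs x assume xs: "xs \<in> SFix T"
  have "Hpd (TG G T x) {xs} \<le> ereal ((\<alpha> + \<beta>) / (1 - \<gamma>) * dist x xs)"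
    using coef contr by (intro Hpd_singleton_le_at_fixed_point TG_SFix G_diag xs) auto
  also have "(\<alpha> + \<beta>) / (1 - \<gamma>) * dist x xs \<le> dist x xs"
    using coef by (intro mult_left_le_one_le) (auto simp: field_simps)
  finally have "ereal l * Hpd (TG G T x) {xs} \<le> ereal l * ereal (dist x xs)"
    using l by (intro ereal_mult_left_mono) auto
  with lcond[OF xs, of x] show "Hpd (T x) {xs} \<le> ereal (l * dist x xs)"
    by (metis order_trans times_ereal.simps(1))
qed (use l in auto)

end
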